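(* Let $k,n\in\mathbb N^+$ and $\mathbf C=(c_0,\dots,c_k)\in\{0,1\}^{k+1}$. For every integer $m$ with $1\le m\le n$, $$O_{\mathbf C}(n,m+c_k-1)=(n-1)!^k\sum_{\substack{J\subseteq\{2,\dots,n\}\\ |J|=m-1}}\ \prod_{j\in J}F_j(\mathbf C)\prod_{j\in\{2,\dots,n\}\setminus J}F_j(\mathbf C'),$$ and for every integer $m\ge 0$ with $m=0$ or $m>n$, $O_{\mathbf C}(n,m+c_k-1)=0$.
   Context: Fix integers $k\ge 1$, $n\ge 1$ and a vector $\mathbf C=(c_0,c_1,\dots,c_k)\in\{0,1\}^{k+1}$; put $\mathbf C'=(1,\dots,1)-\mathbf C=(c'_0,\dots,c'_k)$. Consider $k$-tuples $(\pi_1,\dots,\pi_k)$ of permutations of $\{1,\dots,n\}$ (there are $n!^k$ of them). A position $\alpha\in\{1,\dots,n\}$ is a record of a permutation $\pi$ if $\pi(\alpha)<\pi(\alpha')$ for every $\alpha'<\alpha$ (so position $1$ is always a record); equivalently, the records index the unique minimum-cardinality subset of the points $\{(\alpha,\pi(\alpha))\}$ such that every point either lies in it or is strictly dominated in both coordinates by one of its points (the "optimization set" for the relation $(<,<)$). For a tuple, let $l_\alpha$ be the number of $\beta\in\{1,\dots,k\}$ for which $\alpha$ is a record of $\pi_\beta$ (so $l_1=k$). The $\mathbf C$ sequential optimization set of the tuple is $S=\{\alpha: c_{l_\alpha}=1\}$, and its weight is $|S|$. For an integer $m$, the $\mathbf C$ sequential optimization number $O_{\mathbf C}(n,m)$ is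 the number of $k$-tuples whose weight equals $m$ (so $O_{\mathbf C}(n,m)=0$ if $m<0$ or $m>n$). For $j\ge 2$ and $X=(x_0,\dots,x_k)\in\mathbb R^{k+1}$ set $F_j(X)=\sum_{\beta=0}^k\binom{k}{\beta}\frac{x_\beta}{(j-1)^\beta}$. Empty products equal $1$. *)

theory Defs
  imports Main "HOL-Library.FuncSet" "HOL-Combinatorics.Permutations" Complex_Main
begin

definition perm_tuples :: "nat \<Rightarrow> nat \<Rightarrow> (nat \<Rightarrow> nat \<Rightarrow> nat) set" where
  "perm_tuples k n = Pi\<^sub>E {1..k} (\<lambda>_. {p. p permutes {1..n}})"

definition is_record :: "nat \<Rightarrow> (nat \<Rightarrow> nat) \<Rightarrow> nat \<Rightarrow> bool" where
  "is_record n p a \<longleftrightarrow> a \<in> {1..n} \<and> (\<forall>a'. 1 \<le> a' \<and> a' < a \<longrightarrow> p a < p a')"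

definition rec_count :: "nat \<Rightarrow> nat \<Rightarrow> (nat \<Rightarrow> nat \<Rightarrow> nat) \<Rightarrow> nat \<Rightarrow> nat" where
  "rec_count k n t a = card {b \<in> {1..k}. is_record n (t b) a}"

definition seq_opt_set :: "(nat \<Rightarrow> int) \<Rightarrow> nat \<Rightarrow> nat \<Rightarrow> (nat \<Rightarrow> nat \<Rightarrow> nat) \<Rightarrow> nat set" where
  "seq_opt_set c k n t = {a \<in> {1..n}. c (rec_count k n t a) = 1}"

definition seq_opt_num :: "(nat \<Rightarrow> int) \<Rightarrow> nat \<Rightarrow> nat \<Rightarrow> int \<Rightarrow> nat" where
  "seq_opt_num c k n m = card {t \<in> perm_tuples k n. int (card (seq_opt_set c k n t)) = m}"

definition F :: "nat \<Rightarrow> nat \<Rightarrow> (nat \<Rightarrow> real) \<Rightarrow> real" where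
  "F k j X = (\<Sum>b = 0..k. real (k choose b) * X b / (real j - 1) ^ b)"

end

theory Submission
  imports Defs
begin

(* Inserting a value v at a new last position n + 1 of a permutation of {1..n}, shifting the
   larger values up, yields every permutation of {1..n + 1} exactly once; the new position is a
   record iff v = 1, and the records among positions 1..n are unchanged. Hence summing a product
   over a = 2..n of weights h a (a is a record) over all permutations factorises into the product
   of (a - 1) h a False + h a True: the record events are independent. For k-tuples the count l_a
   then carries the weights C(k, b) (a - 1)^(k - b), which is (a - 1)^k times the summands of F_a.
   Position 1 is a record of every permutation and contributes c_k to the weight, and the indicator
   of S \<inter> {2..n} = J is a product of c(l_a) or 1 - c(l_a) over a = 2..n, so the number of tuples
   with S \<inter> {2..n} = J is (n - 1)!^k times the product of the F_j(C), j \<in> J, and F_j(C'), j \<notin> J. *)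

lemma prod_pred_atLeast2_eq_fact: "(\<Prod>a\<in>{2..n}. real (a - 1)) = fact (n - 1)"
  by (induction n) (auto simp: fact_reduce)

lemma prod_of_bool:
  "finite A \<Longrightarrow> (\<Prod>a\<in>A. of_bool (P a)) = (of_bool (\<forall>a\<in>A. P a) :: 'a::comm_semiring_1)"
  by (induction A rule: finite_induct) auto

lemma prod_if_mem_eq_of_bool:
  fixes x :: "'b \<Rightarrow> 'a::comm_ring_1"
  assumes "finite A" and "\<forall>a\<in>A. x a \<in> {0, 1}"
  shows "(\<Prod>a\<in>A. if a \<in> J then x a else 1 - x a) = of_bool (\<forall>a\<in>A. a \<in> J \<longleftrightarrow> x a = 1)"
proof -
  have "(if a \<in> J then x a else 1 - x a) = of_bool (a \<in> J \<longleftrightarrow> x a = 1)" if "a \<in> A" for a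
    using assms(2) that by auto
  then show ?thesis
    using assms(1) by (simp add: prod_of_bool cong: prod.cong)
qed

definition binomial_weighted_sum :: "nat \<Rightarrow> 'a::comm_semiring_1 \<Rightarrow> (nat \<Rightarrow> 'a) \<Rightarrow> 'a" where
  "binomial_weighted_sum k x g = (\<Sum>b\<le>k. of_nat (k choose b) * x ^ (k - b) * g b)"

lemma binomial_weighted_sum_Suc:
  "binomial_weighted_sum (Suc k) x g
     = x * binomial_weighted_sum k x g + binomial_weighted_sum k x (\<lambda>b. g (Suc b))"
proof -
  have "x * binomial_weighted_sum k x g = (\<Sum>b\<le>Suc k. of_nat (k choose b) * x ^ (Suc k - b) * g b)"
    by (simp add: binomial_weighted_sum_def sum_distrib_left Suc_diff_le binomial_eq_0 mult_ac)
  also have "\<dots> = x ^ Suc k * g 0 + (\<Sum>b\<le>k. of_nat (k choose Suc b) * x ^ (k - b) * g (Suc b))"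
    by (subst sum.atMost_Suc_shift) simp
  finally have shifted: "x * binomial_weighted_sum k x g = \<dots>" .
  have "binomial_weighted_sum (Suc k) x g
      = x ^ Suc k * g 0 + (\<Sum>b\<le>k. of_nat (Suc k choose Suc b) * x ^ (k - b) * g (Suc b))"
    unfolding binomial_weighted_sum_def by (subst sum.atMost_Suc_shift) simp
  also have "\<dots> = x ^ Suc k * g 0 + (\<Sum>b\<le>k. of_nat (k choose Suc b) * x ^ (k - b) * g (Suc b))
      + binomial_weighted_sum k x (\<lambda>b. g (Suc b))"
    by (simp add: binomial_weighted_sum_def sum.distrib algebra_simps)
  finally show ?thesis
    by (simp only: shifted)
qed

definition extend_perm :: "nat \<Rightarrow> nat \<Rightarrow> (nat \<Rightarrow> nat) \<Rightarrow> nat \<Rightarrow> nat" where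
  "extend_perm n v q i =
     (if i = Suc n then v else if i \<in> {1..n} then (if q i < v then q i else Suc (q i)) else i)"

lemma extend_perm_less_iff:
  assumes "i \<in> {1..n}" and "j \<in> {1..n}"
  shows "extend_perm n v q i < extend_perm n v q j \<longleftrightarrow> q i < q j"
  using assms by (auto simp: extend_perm_def)

lemma extend_perm_last [simp]: "extend_perm n v q (Suc n) = v"
  by (simp add: extend_perm_def)

lemma extend_perm_in:
  assumes q: "q permutes {1..n}" and v: "v \<in> {1..Suc n}" and i: "i \<in> {1..n}"
  shows "extend_perm n v q i \<in> {1..Suc n} - {v}"
  using permutes_in_image[OF q, of i] i v by (auto simp: extend_perm_def)

lemma extend_perm_permutes:
  assumes q: "q permutes {1..n}" and v: "v \<in> {1..Suc n}"
  shows "extend_perm n v q permutes {1..Suc n}"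
proof (rule bij_imp_permutes)
  let ?p = "extend_perm n v q"
  have "inj_on q {1..n}"
    using q by (rule permutes_inj_on)
  have "inj_on ?p {1..n}"
  proof (rule inj_onI)
    fix i j assume ij: "i \<in> {1..n}" "j \<in> {1..n}" and "?p i = ?p j"
    then have "q i = q j"
      using extend_perm_less_iff[OF ij] extend_perm_less_iff[OF ij(2,1)] by (metis not_less_iff_gr_or_eq)
    with \<open>inj_on q {1..n}\<close> ij show "i = j" by (simp add: inj_on_eq_iff)
  qed
  moreover have "?p (Suc n) \<notin> ?p ` {1..n}"
    using extend_perm_in[OF q v] by (metis Diff_iff extend_perm_last imageE singletonI)
  ultimately have inj: "inj_on ?p {1..Suc n}"
    by (simp add: atLeastAtMostSuc_conv)
  have "?p i \<in> {1..Suc n}" if "i \<in> {1..Suc n}" for i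
    using that extend_perm_in[OF q v, of i] v by (cases "i = Suc n") auto
  then have "?p ` {1..Suc n} \<subseteq> {1..Suc n}"
    by auto
  then have "?p ` {1..Suc n} = {1..Suc n}"
    using inj by (intro endo_inj_surj) auto
  with inj show "bij_betw ?p {1..Suc n} {1..Suc n}"
    by (simp add: bij_betw_def)
qed (auto simp: extend_perm_def)

lemma bij_betw_extend_perm:
  "bij_betw (\<lambda>(v, q). extend_perm n v q)
     ({1..Suc n} \<times> {q. q permutes {1..n}}) {p. p permutes {1..Suc n}}"
proof -
  let ?f = "\<lambda>(v, q). extend_perm n v q" and ?A = "{1..Suc n} \<times> {q. q permutes {1..n}}"
  have inj: "inj_on ?f ?A"
  proof (rule inj_onI, clarify)
    fix v q v' q'
    assume q: "q permutes {1..n}" and q': "q' permutes {1..n}"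
      and eq: "extend_perm n v q = extend_perm n v' q'"
    have v: "v = v'"
      using fun_cong[OF eq, of "Suc n"] by simp
    have "q i = q' i" for i
    proof (cases "i \<in> {1..n}")
      case True
      then show ?thesis
        using fun_cong[OF eq, of i] v by (auto simp: extend_perm_def split: if_splits)
    next
      case False
      then show ?thesis
        using q q' by (simp add: permutes_not_in)
    qed
    with v show "v = v' \<and> q = q'" by auto
  qed
  have "?f ` ?A = {p. p permutes {1..Suc n}}"
  proof (rule card_subset_eq)
    show "?f ` ?A \<subseteq> {p. p permutes {1..Suc n}}"
      using extend_perm_permutes by auto
    show "card (?f ` ?A) = card {p. p permutes {1..Suc n}}"
      by (subst card_image[OF inj]) (simp add: card_cartesian_product card_permutations)
  qed (simp add: finite_permutations)
  with inj show ?thesis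
    by (simp add: bij_betw_def)
qed

lemma is_record_extend_perm:
  assumes "a \<in> {1..n}"
  shows "is_record (Suc n) (extend_perm n v q) a \<longleftrightarrow> is_record n q a"
  using assms extend_perm_less_iff[of _ n] by (auto simp: is_record_def)

lemma is_record_extend_perm_last:
  assumes q: "q permutes {1..n}" and v: "v \<in> {1..Suc n}"
  shows "is_record (Suc n) (extend_perm n v q) (Suc n) \<longleftrightarrow> v = 1"
proof
  assume "v = 1"
  then show "is_record (Suc n) (extend_perm n v q) (Suc n)"
    using extend_perm_in[OF q v] by (fastforce simp: is_record_def)
next
  assume rec: "is_record (Suc n) (extend_perm n v q) (Suc n)"
  show "v = 1"
  proof (rule ccontr)
    assume "v \<noteq> 1"
    then have "1 \<in> q ` {1..n}"
      using v permutes_image[OF q] by auto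
    then obtain a where a: "a \<in> {1..n}" "q a = 1"
      by auto
    then have "extend_perm n v q a = 1"
      using \<open>v \<noteq> 1\<close> v by (simp add: extend_perm_def)
    then show False
      using rec a v by (force simp: is_record_def)
  qed
qed

lemma sum_permutes_prod_is_record:
  fixes h :: "nat \<Rightarrow> bool \<Rightarrow> 'a::comm_semiring_1"
  assumes "n \<ge> 1"
  shows "(\<Sum>p | p permutes {1..n}. \<Prod>a\<in>{2..n}. h a (is_record n p a))
       = (\<Prod>a\<in>{2..n}. of_nat (a - 1) * h a False + h a True)"
  using assms
proof (induction n rule: nat_induct_at_least)
  case base
  then show ?case by simp
next
  case (Suc n)
  let ?P = "{q. q permutes {1..n}}"
  have ins: "{2..Suc n} = insert (Suc n) {2..n}"
    using Suc.hyps by auto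
  have extend: "(\<Prod>a\<in>{2..Suc n}. h a (is_record (Suc n) (extend_perm n v q) a))
      = h (Suc n) (v = 1) * (\<Prod>a\<in>{2..n}. h a (is_record n q a))"
    if "v \<in> {1..Suc n}" and "q \<in> ?P" for v q
    using that by (simp add: ins is_record_extend_perm is_record_extend_perm_last)
  have last_position: "(\<Sum>v\<in>{1..Suc n}. h (Suc n) (v = 1)) = h (Suc n) True + of_nat n * h (Suc n) False"
  proof -
    have "{1..Suc n} = insert 1 {2..Suc n}" by auto
    then show ?thesis by simp
  qed
  have "(\<Sum>p | p permutes {1..Suc n}. \<Prod>a\<in>{2..Suc n}. h a (is_record (Suc n) p a))
      = (\<Sum>(v, q)\<in>{1..Suc n} \<times> ?P.
           \<Prod>a\<in>{2..Suc n}. h a (is_record (Suc n) (extend_perm n v q) a))"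
    by (subst sum.reindex_bij_betw[OF bij_betw_extend_perm, symmetric]) (simp add: split_def)
  also have "\<dots> = (\<Sum>v\<in>{1..Suc n}. \<Sum>q\<in>?P. h (Suc n) (v = 1) * (\<Prod>a\<in>{2..n}. h a (is_record n q a)))"
    unfolding sum.cartesian_product by (intro sum.cong refl) (auto simp del: prod.cl_ivl_Suc simp add: extend)
  also have "\<dots> = (\<Sum>v\<in>{1..Suc n}. h (Suc n) (v = 1))
      * (\<Prod>a\<in>{2..n}. of_nat (a - 1) * h a False + h a True)"
    by (simp only: sum_distrib_left[symmetric] Suc.IH sum_distrib_right[symmetric])
  also have "\<dots> = (of_nat n * h (Suc n) False + h (Suc n) True)
      * (\<Prod>a\<in>{2..n}. of_nat (a - 1) * h a False + h a True)"
    by (simp only: last_position add.commute)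
  finally show ?case
    by (simp add: ins)
qed

lemma rec_count_fun_upd:
  "rec_count (Suc k) n (t(Suc k := p)) a = rec_count k n t a + of_bool (is_record n p a)"
proof -
  have "{b \<in> {1..Suc k}. is_record n ((t(Suc k := p)) b) a}
      = {b \<in> {1..k}. is_record n (t b) a} \<union> (if is_record n p a then {Suc k} else {})"
    by auto
  then show ?thesis
    by (simp add: rec_count_def card_insert_if)
qed

lemma bij_betw_perm_tuples_Suc:
  "bij_betw (\<lambda>(p, t). t(Suc k := p)) ({p. p permutes {1..n}} \<times> perm_tuples k n) (perm_tuples (Suc k) n)"
proof -
  have "{1..Suc k} = insert (Suc k) {1..k}"
    by auto
  then show ?thesis
    using inj_combinator[of "Suc k" "{1..k}" "\<lambda>_. {p. p permutes {1..n}}"]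
    unfolding perm_tuples_def bij_betw_def by (simp add: PiE_insert_eq)
qed

lemma sum_perm_tuples_prod_rec_count:
  fixes g :: "nat \<Rightarrow> nat \<Rightarrow> 'a::comm_semiring_1"
  assumes "n \<ge> 1"
  shows "(\<Sum>t\<in>perm_tuples k n. \<Prod>a\<in>{2..n}. g a (rec_count k n t a))
       = (\<Prod>a\<in>{2..n}. binomial_weighted_sum k (of_nat (a - 1)) (g a))"
proof (induction k arbitrary: g)
  case 0
  have "perm_tuples 0 n = {\<lambda>_. undefined}"
    by (simp add: perm_tuples_def)
  then show ?case
    by (simp add: rec_count_def binomial_weighted_sum_def)
next
  case (Suc k)
  let ?w = "\<lambda>a r. binomial_weighted_sum k (of_nat (a - 1)) (\<lambda>b. g a (b + of_bool r))"
  have "(\<Sum>t\<in>perm_tuples (Suc k) n. \<Prod>a\<in>{2..n}. g a (rec_count (Suc k) n t a))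
      = (\<Sum>p | p permutes {1..n}. \<Sum>t\<in>perm_tuples k n.
           \<Prod>a\<in>{2..n}. g a (rec_count k n t a + of_bool (is_record n p a)))"
    by (simp add: sum.reindex_bij_betw[OF bij_betw_perm_tuples_Suc, symmetric]
        sum.cartesian_product split_def rec_count_fun_upd)
  also have "\<dots> = (\<Sum>p | p permutes {1..n}. \<Prod>a\<in>{2..n}. ?w a (is_record n p a))"
    by (rule sum.cong[OF refl], rule Suc.IH)
  also have "\<dots> = (\<Prod>a\<in>{2..n}. of_nat (a - 1) * ?w a False + ?w a True)"
    by (rule sum_permutes_prod_is_record[OF assms])
  also have "\<dots> = (\<Prod>a\<in>{2..n}. binomial_weighted_sum (Suc k) (of_nat (a - 1)) (g a))"
    by (simp add: binomial_weighted_sum_Suc)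
  finally show ?case .
qed

lemma binomial_weighted_sum_eq_F:
  assumes "j \<ge> 2"
  shows "binomial_weighted_sum k (real (j - 1)) X = real (j - 1) ^ k * F k j X"
proof -
  have "real (j - 1) ^ (k - b) = real (j - 1) ^ k / (real j - 1) ^ b" if "b \<le> k" for b
    using that assms by (simp add: power_diff)
  then show ?thesis
    by (simp add: binomial_weighted_sum_def F_def sum_distrib_left atLeast0AtMost mult_ac)
qed

lemma finite_perm_tuples: "finite (perm_tuples k n)"
  unfolding perm_tuples_def by (rule finite_PiE) (auto simp: finite_permutations)

lemma rec_count_le: "rec_count k n t a \<le> k"
  unfolding rec_count_def by (rule card_mono[of "{1..k}", simplified]) auto

lemma rec_count_first:
  assumes "n \<ge> 1"
  shows "rec_count k n t 1 = k"
proof -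
  have "{b \<in> {1..k}. is_record n (t b) 1} = {1..k}"
    using assms by (auto simp: is_record_def)
  then show ?thesis
    by (simp add: rec_count_def)
qed

definition seq_opt_tail :: "(nat \<Rightarrow> int) \<Rightarrow> nat \<Rightarrow> nat \<Rightarrow> (nat \<Rightarrow> nat \<Rightarrow> nat) \<Rightarrow> nat set" where
  "seq_opt_tail c k n t = {a \<in> {2..n}. c (rec_count k n t a) = 1}"

lemma card_seq_opt_tail_le: "card (seq_opt_tail c k n t) \<le> n - 1"
proof -
  have "card (seq_opt_tail c k n t) \<le> card {2..n}"
    by (rule card_mono) (auto simp: seq_opt_tail_def)
  then show ?thesis
    by simp
qed

lemma card_seq_opt_set:
  assumes "n \<ge> 1" and "c k \<in> {0, 1}"
  shows "int (card (seq_opt_set c k n t)) = c k + int (card (seq_opt_tail c k n t))"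
proof -
  have "{1..n} = insert 1 {2..n}"
    using assms(1) by auto
  then have "seq_opt_set c k n t = (if c k = 1 then insert 1 else id) (seq_opt_tail c k n t)"
    using rec_count_first[OF assms(1)] by (auto simp: seq_opt_set_def seq_opt_tail_def)
  then show ?thesis
    using assms(2) by (auto simp: seq_opt_tail_def)
qed

lemma card_seq_opt_tail_eq:
  assumes n: "n \<ge> 1" and c: "\<forall>i \<le> k. c i \<in> {0, 1}" and J: "J \<subseteq> {2..n}"
  shows "real (card {t \<in> perm_tuples k n. seq_opt_tail c k n t = J})
       = fact (n - 1) ^ k * ((\<Prod>j\<in>J. F k j (\<lambda>i. real_of_int (c i)))
                            * (\<Prod>j\<in>{2..n} - J. F k j (\<lambda>i. 1 - real_of_int (c i))))"
proof -
  let ?C = "\<lambda>i. real_of_int (c i)" and ?C' = "\<lambda>i. 1 - real_of_int (c i)"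
  define G where "G a = (if a \<in> J then ?C else ?C')" for a
  have indicator: "of_bool (seq_opt_tail c k n t = J) = (\<Prod>a\<in>{2..n}. G a (rec_count k n t a))" for t
  proof -
    have "seq_opt_tail c k n t = J
        \<longleftrightarrow> (\<forall>a\<in>{2..n}. a \<in> J \<longleftrightarrow> ?C (rec_count k n t a) = 1)"
      using J by (auto simp: seq_opt_tail_def)
    moreover have "?C (rec_count k n t a) \<in> {0, 1}" for a
      using c rec_count_le[of k n t a] by auto
    ultimately show ?thesis
      by (simp add: G_def prod_if_mem_eq_of_bool if_distrib[of "\<lambda>f. f _"])
  qed
  have "real (card {t \<in> perm_tuples k n. seq_opt_tail c k n t = J})
      = (\<Sum>t\<in>perm_tuples k n. of_bool (seq_opt_tail c k n t = J))"
    by (simp add: finite_perm_tuples Int_def)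
  also have "\<dots> = (\<Prod>a\<in>{2..n}. binomial_weighted_sum k (real (a - 1)) (G a))"
    by (simp only: indicator sum_perm_tuples_prod_rec_count[OF n])
  also have "\<dots> = (\<Prod>a\<in>{2..n}. real (a - 1) ^ k * (if a \<in> J then F k a ?C else F k a ?C'))"
  proof (rule prod.cong[OF refl])
    fix a assume "a \<in> {2..n}"
    then show "binomial_weighted_sum k (real (a - 1)) (G a)
        = real (a - 1) ^ k * (if a \<in> J then F k a ?C else F k a ?C')"
      using binomial_weighted_sum_eq_F[of a k] by (simp add: G_def)
  qed
  also have "\<dots> = (\<Prod>a\<in>{2..n}. real (a - 1)) ^ k * ((\<Prod>j\<in>J. F k j ?C) * (\<Prod>j\<in>{2..n} - J. F k j ?C'))"
    using J by (simp add: prod.distrib prod_power_distrib prod.If_cases Int_absorb1 Diff_eq)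
  finally show ?thesis
    by (simp only: prod_pred_atLeast2_eq_fact)
qed

lemma seq_opt_num_eq_card_seq_opt_tail:
  assumes "n \<ge> 1" and "c k \<in> {0, 1}"
  shows "seq_opt_num c k n (m + c k - 1)
       = card {t \<in> perm_tuples k n. int (card (seq_opt_tail c k n t)) = m - 1}"
  using card_seq_opt_set[of n c k] assms by (simp add: seq_opt_num_def algebra_simps)

lemma seq_opt_num_eq_sum:
  assumes n: "n \<ge> 1" and c: "\<forall>i \<le> k. c i \<in> {0, 1}"
  shows "real (seq_opt_num c k n (m + c k - 1))
       = fact (n - 1) ^ k *
         (\<Sum>J \<in> {J. J \<subseteq> {2..n} \<and> int (card J) = m - 1}.
            (\<Prod>j\<in>J. F k j (\<lambda>i. real_of_int (c i)))
            * (\<Prod>j\<in>{2..n} - J. F k j (\<lambda>i. 1 - real_of_int (c i))))"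
proof -
  let ?T = "perm_tuples k n" and ?tail = "seq_opt_tail c k n"
  define JJ where "JJ = {J. J \<subseteq> {2..n} \<and> int (card J) = m - 1}"
  have "finite JJ"
    by (rule finite_subset[of _ "Pow {2..n}"]) (auto simp: JJ_def)
  have "{t \<in> ?T. int (card (?tail t)) = m - 1} = (\<Union>J\<in>JJ. {t \<in> ?T. ?tail t = J})"
    by (auto simp: JJ_def seq_opt_tail_def)
  moreover have "card (\<Union>J\<in>JJ. {t \<in> ?T. ?tail t = J}) = (\<Sum>J\<in>JJ. card {t \<in> ?T. ?tail t = J})"
    by (rule card_UN_disjoint) (auto simp: \<open>finite JJ\<close> finite_perm_tuples)
  ultimately have "real (seq_opt_num c k n (m + c k - 1)) = (\<Sum>J\<in>JJ. real (card {t \<in> ?T. ?tail t = J}))"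
    using c by (simp add: seq_opt_num_eq_card_seq_opt_tail[OF n])
  also have "\<dots> = fact (n - 1) ^ k *
      (\<Sum>J\<in>JJ. (\<Prod>j\<in>J. F k j (\<lambda>i. real_of_int (c i)))
                * (\<Prod>j\<in>{2..n} - J. F k j (\<lambda>i. 1 - real_of_int (c i))))"
    by (simp add: card_seq_opt_tail_eq[OF n c] JJ_def sum_distrib_left)
  finally show ?thesis
    by (simp only: JJ_def)
qed

lemma seq_opt_num_eq_0:
  assumes n: "n \<ge> 1" and "c k \<in> {0, 1}" and "m < 1 \<or> m > int n"
  shows "seq_opt_num c k n (m + c k - 1) = 0"
proof -
  have "int (card (seq_opt_tail c k n t)) \<noteq> m - 1" for t
    using card_seq_opt_tail_le[of c k n t] n assms(3) by linarith
  then show ?thesis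
    using seq_opt_num_eq_card_seq_opt_tail[of n c k m] assms(1,2) by simp
qed

theorem theorem2p1:
  fixes k n :: nat and c :: "nat \<Rightarrow> int"
  assumes "k \<ge> 1" and "n \<ge> 1"
    and "\<forall>i \<le> k. c i \<in> {0, 1}"
  shows "(\<forall>m::int. 1 \<le> m \<and> m \<le> int n \<longrightarrow>
            real (seq_opt_num c k n (m + c k - 1)) =
            (fact (n - 1)) ^ k *
            (\<Sum>J \<in> {J. J \<subseteq> {2..n} \<and> int (card J) = m - 1}.
               (\<Prod>j \<in> J. F k j (\<lambda>i. real_of_int (c i))) *
               (\<Prod>j \<in> {2..n} - J. F k j (\<lambda>i. 1 - real_of_int (c i)))))
       \<and> (\<forall>m::int. m \<ge> 0 \<and> (m = 0 \<or> m > int n) \<longrightarrow>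
            seq_opt_num c k n (m + c k - 1) = 0)"
proof -
  have "c k \<in> {0, 1}"
    using assms(3) by simp
  then show ?thesis
    by (intro conjI allI impI seq_opt_num_eq_sum[OF assms(2,3)] seq_opt_num_eq_0[OF assms(2)]) auto
qed

end
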